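(* Let $\mathbb{0}=\{x\in\omega^\omega : x(n)=0 \text{ for all but finitely many } n\}$ and consider $P=\omega^\omega\setminus\mathbb{0}$ ordered by $\le^*$. Then $\mathfrak{icp}(P,\le^* )=\mathfrak{b}$ and $\mathfrak{cp}(P,\le^* )=\mathfrak{d}$.
   Context: For $x,y\in\omega^\omega$, $x\le^* y$ means $x(n)\le y(n)$ for all but finitely many $n$. For a poset (or preorder) $(P,\le)$: $F\subseteq P$ is a comparable family if for every $p\in P$ there is $q\in F$ with $p\le q$ or $q\le p$; $F$ is an incomparable family if for every $p\in P$ there is $q\in F$ with $p\not\le q$ and $q\not\le p$. $\mathfrak{cp}(P,\le)$ is the minimal size of a comparable family and $\mathfrak{icp}(P,\le)$ is the minimal size of an incomparable family. $\mathfrak{b}$ and $\mathfrak{d}$ are the usual bounding and dominating numbers of $(\omega^\omega,\le^* )$. *)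

theory Defs
  imports Main
begin

definition le_star :: "(nat \<Rightarrow> nat) \<Rightarrow> (nat \<Rightarrow> nat) \<Rightarrow> bool" where
  "le_star x y \<longleftrightarrow> finite {n. \<not> x n \<le> y n}"

definition zero_ev :: "(nat \<Rightarrow> nat) set" where
  "zero_ev = {x. finite {n. x n \<noteq> 0}}"

definition Pset :: "(nat \<Rightarrow> nat) set" where
  "Pset = UNIV - zero_ev"

definition comparable_family :: "'a set \<Rightarrow> ('a \<Rightarrow> 'a \<Rightarrow> bool) \<Rightarrow> 'a set \<Rightarrow> bool" where
  "comparable_family P le F \<longleftrightarrow> F \<subseteq> P \<and> (\<forall>p\<in>P. \<exists>q\<in>F. le p q \<or> le q p)"

definition incomparable_family :: "'a set \<Rightarrow> ('a \<Rightarrow> 'a \<Rightarrow> bool) \<Rightarrow> 'a set \<Rightarrow> bool" where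
  "incomparable_family P le F \<longleftrightarrow> F \<subseteq> P \<and> (\<forall>p\<in>P. \<exists>q\<in>F. \<not> le p q \<and> \<not> le q p)"

definition unbounded_family :: "(nat \<Rightarrow> nat) set \<Rightarrow> bool" where
  "unbounded_family F \<longleftrightarrow> \<not> (\<exists>y. \<forall>x\<in>F. le_star x y)"

definition dominating_family :: "(nat \<Rightarrow> nat) set \<Rightarrow> bool" where
  "dominating_family F \<longleftrightarrow> (\<forall>x. \<exists>y\<in>F. le_star x y)"

text \<open>This says exactly
  min{|A| : Q1 A} = min{|B| : Q2 B}, including that both minima exist iff one does.\<close>
definition same_min_card :: "('a set \<Rightarrow> bool) \<Rightarrow> ('b set \<Rightarrow> bool) \<Rightarrow> bool" where
  "same_min_card Q1 Q2 \<longleftrightarrow>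
     (\<forall>A. Q1 A \<longrightarrow> (\<exists>B. Q2 B \<and> (card_of B, card_of A) \<in> ordLeq)) \<and>
     (\<forall>B. Q2 B \<longrightarrow> (\<exists>A. Q1 A \<and> (card_of A, card_of B) \<in> ordLeq))"

end

theory Submission
  imports Defs "HOL-Library.Infinite_Set"
begin

text \<open>An incomparable family is unbounded, since every \<open>y + 1\<close> lies in \<open>P\<close>, and a
  dominating family shifted by one is comparable.  Conversely, code \<open>x\<close> by the interval
  partition \<open>0 = j 0 < j 1 < \<dots>\<close>, where \<open>j (k+1)\<close> exceeds \<open>x\<close> on \<open>[0, j k]\<close>, and by
  \<open>spike x \<in> P\<close>, which is \<open>j (k+2)\<close> at \<open>j k\<close> and \<open>0\<close> elsewhere.
  If \<open>p \<in> P\<close> and \<open>b\<close> escapes a bound computed from \<open>p\<close> at some \<open>n\<close>, the block of \<open>n\<close>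
  is so long that the next two points of the support of \<open>p\<close> are not both partition points,
  while \<open>p\<close> is small at a partition point nearby: so \<open>spike b\<close> and \<open>p\<close> are incomparable.
  If \<open>q\<close> is comparable with \<open>spike x\<close>, then either \<open>q\<close> is eventually large on the partition
  points or its support is eventually among them; either way a function computed from \<open>q\<close>
  alone dominates \<open>x\<close>.\<close>

lemma le_star_iff: "le_star x y \<longleftrightarrow> (\<exists>N. \<forall>n\<ge>N. x n \<le> y n)"
  unfolding le_star_def by (metis (mono_tags) INFM_nat_le MOST_nat_le not_MOST not_le INFM_iff_infinite)

lemma not_le_star_iff: "\<not> le_star x y \<longleftrightarrow> (\<forall>N. \<exists>n\<ge>N. y n < x n)"
  unfolding le_star_iff by (auto simp: not_le)

lemma Pset_iff: "q \<in> Pset \<longleftrightarrow> (\<forall>n. \<exists>m>n. q m \<noteq> 0)"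
  unfolding Pset_def zero_ev_def by (simp add: infinite_nat_iff_unbounded)

lemma Pset_if_infinite_support: "infinite {n. q n \<noteq> 0} \<Longrightarrow> q \<in> Pset"
  unfolding Pset_def zero_ev_def by simp

definition next_support :: "(nat \<Rightarrow> nat) \<Rightarrow> nat \<Rightarrow> nat" where
  "next_support q n = (LEAST m. n < m \<and> q m \<noteq> 0)"

lemma next_support:
  assumes "q \<in> Pset"
  shows "n < next_support q n" "q (next_support q n) \<noteq> 0"
proof -
  from assms obtain m where "n < m" "q m \<noteq> 0" unfolding Pset_iff by blast
  then have "n < next_support q n \<and> q (next_support q n) \<noteq> 0"
    unfolding next_support_def by (rule LeastI[of "\<lambda>m. n < m \<and> q m \<noteq> 0", OF conjI])
  then show "n < next_support q n" "q (next_support q n) \<noteq> 0" by auto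
qed

definition majorant :: "(nat \<Rightarrow> nat) \<Rightarrow> nat \<Rightarrow> nat" where
  "majorant x n = n + 1 + (\<Sum>m\<le>n. x m)"

lemma less_majorant: "n < majorant x n"
  unfolding majorant_def by simp

lemma majorant_greater: "m \<le> n \<Longrightarrow> x m < majorant x n"
  unfolding majorant_def using member_le_sum[of m "{..n}" x] by simp

primrec jumps :: "(nat \<Rightarrow> nat) \<Rightarrow> nat \<Rightarrow> nat" where
  "jumps x 0 = 0"
| "jumps x (Suc k) = majorant x (jumps x k)"

lemma strict_mono_jumps: "strict_mono (jumps x)"
  unfolding strict_mono_Suc_iff by (simp add: less_majorant)

lemma le_jumps: "k \<le> jumps x k"
  using strict_mono_jumps strict_mono_imp_increasing by blast

lemma jumps_less_iff [simp]: "jumps x i < jumps x j \<longleftrightarrow> i < j"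
  using strict_mono_jumps strict_mono_less by blast

lemma jumps_block: "\<exists>k. jumps x k \<le> n \<and> n < jumps x (Suc k)"
proof (induction n)
  case 0
  show ?case by (intro exI[of _ 0]) (simp add: less_majorant)
next
  case (Suc n)
  then obtain k where k: "jumps x k \<le> n" "n < jumps x (Suc k)" by blast
  show ?case
  proof (cases "Suc n < jumps x (Suc k)")
    case True
    with k show ?thesis by (auto intro!: exI[of _ k])
  next
    case False
    with k have "Suc n = jumps x (Suc k)" by simp
    then show ?thesis using jumps_less_iff[of x "Suc k" "Suc (Suc k)"]
      by (intro exI[of _ "Suc k"]) (simp del: jumps.simps)
  qed
qed

lemma jumps_block_index: "jumps x N \<le> n \<Longrightarrow> n < jumps x (Suc k) \<Longrightarrow> N \<le> k"
  using jumps_less_iff[of x N "Suc k"] by linarith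

lemma less_jumps_Suc_Suc: "n \<le> jumps x (Suc k) \<Longrightarrow> x n < jumps x (Suc (Suc k))"
  using majorant_greater[of n "jumps x (Suc k)" x] by simp

lemma two_jumps_above:
  assumes "m \<in> range (jumps x)" "m' \<in> range (jumps x)" "jumps x k < m" "m < m'"
  shows "jumps x (Suc (Suc k)) \<le> m'"
proof -
  obtain i i' where "m = jumps x i" "m' = jumps x i'" using assms(1,2) by blast
  with assms(3,4) have "Suc (Suc k) \<le> i'" by simp
  then show ?thesis
    using \<open>m' = jumps x i'\<close> strict_mono_jumps strict_mono_less_eq by blast
qed

definition spike :: "(nat \<Rightarrow> nat) \<Rightarrow> nat \<Rightarrow> nat" where
  "spike x m = (if m \<in> range (jumps x) then majorant x (majorant x m) else 0)"

lemma spike_jumps [simp]: "spike x (jumps x k) = jumps x (Suc (Suc k))"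
  unfolding spike_def by simp

lemma spike_in_Pset: "spike x \<in> Pset"
proof (rule Pset_if_infinite_support)
  have "range (jumps x) \<subseteq> {n. spike x n \<noteq> 0}"
    using strict_mono_jumps by (auto simp: spike_def majorant_def)
  moreover have "infinite (range (jumps x))"
    using strict_mono_jumps finite_imageD strict_mono_imp_inj_on by blast
  ultimately show "infinite {n. spike x n \<noteq> 0}" using finite_subset by blast
qed

lemma unbounded_family_if_incomparable:
  assumes "incomparable_family Pset le_star F"
  shows "unbounded_family F"
  unfolding unbounded_family_def
proof
  assume "\<exists>y. \<forall>x\<in>F. le_star x y"
  then obtain y where y: "\<forall>x\<in>F. le_star x y" by blast
  have "(\<lambda>n. y n + 1) \<in> Pset" by (auto simp: Pset_iff)
  then obtain q where "q \<in> F" "\<not> le_star q (\<lambda>n. y n + 1)"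
    using assms unfolding incomparable_family_def by blast
  with y show False unfolding le_star_iff by (meson trans_le_add1)
qed

lemma comparable_family_if_dominating:
  assumes "dominating_family D"
  shows "comparable_family Pset le_star ((\<lambda>x n. x n + 1) ` D)"
  unfolding comparable_family_def
proof
  show "(\<lambda>x n. x n + 1) ` D \<subseteq> Pset" by (auto simp: Pset_iff)
  show "\<forall>p\<in>Pset. \<exists>q\<in>(\<lambda>x n. x n + 1) ` D. le_star p q \<or> le_star q p"
  proof
    fix p
    obtain x where "x \<in> D" "le_star p x" using assms unfolding dominating_family_def by blast
    moreover from \<open>le_star p x\<close> have "le_star p (\<lambda>n. x n + 1)"
      unfolding le_star_iff by (meson trans_le_add1)
    ultimately show "\<exists>q\<in>(\<lambda>x n. x n + 1) ` D. le_star p q \<or> le_star q p" by blast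
  qed
qed

definition incomparability_bound :: "(nat \<Rightarrow> nat) \<Rightarrow> nat \<Rightarrow> nat" where
  "incomparability_bound p n =
     majorant p (majorant p (next_support p (next_support p n)))"

lemma frequently_exceeds_in_block:
  assumes "\<not> le_star b g"
  shows "\<exists>n k. N \<le> k \<and> jumps b k \<le> n \<and> n < jumps b (Suc k) \<and> g n < b n"
proof -
  obtain n where n: "jumps b N \<le> n" "g n < b n" using assms unfolding not_le_star_iff by blast
  obtain k where "jumps b k \<le> n" "n < jumps b (Suc k)" using jumps_block by blast
  with n show ?thesis using jumps_block_index by blast
qed

lemma not_le_star_spike:
  assumes p: "p \<in> Pset" and b: "\<not> le_star b (incomparability_bound p)"
  shows "\<not> le_star p (spike b)"
  unfolding not_le_star_iff
proof
  fix N
  obtain n k where nk: "N \<le> k" "jumps b k \<le> n" "n < jumps b (Suc k)"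
    and exceeds: "incomparability_bound p n < b n"
    using frequently_exceeds_in_block[OF b] by blast
  define a where "a = next_support p n"
  define a' where "a' = next_support p a"
  have a: "n < a" "p a \<noteq> 0" and a': "a < a'" "p a' \<noteq> 0"
    using next_support[OF p] unfolding a_def a'_def by auto
  have "a' < incomparability_bound p n"
    unfolding incomparability_bound_def a'_def a_def
    using less_majorant less_trans by blast
  also have "\<dots> < jumps b (Suc (Suc k))"
    using exceeds less_jumps_Suc_Suc[of n b k] nk(3) by simp
  finally have "\<not> (a \<in> range (jumps b) \<and> a' \<in> range (jumps b))"
    using two_jumps_above[of a b a' k] a(1) a'(1) nk(2) by auto
  moreover have "N \<le> n" using nk le_jumps[of k b] by simp
  ultimately show "\<exists>m\<ge>N. spike b m < p m"
    using a a' by (auto simp: spike_def intro: exI[of _ a] exI[of _ a'])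
qed

lemma spike_not_le_star:
  assumes p: "p \<in> Pset" and b: "\<not> le_star b (incomparability_bound p)"
  shows "\<not> le_star (spike b) p"
  unfolding not_le_star_iff
proof
  fix N
  obtain n k where nk: "N \<le> k" "jumps b k \<le> n" "n < jumps b (Suc k)"
    and exceeds: "incomparability_bound p n < b n"
    using frequently_exceeds_in_block[OF b] by blast
  define a' where "a' = next_support p (next_support p n)"
  show "\<exists>m\<ge>N. p m < spike b m"
  proof (cases "jumps b (Suc k) \<le> majorant p a'")
    case True
    have "p (jumps b (Suc k)) < incomparability_bound p n"
      using majorant_greater[OF True] unfolding incomparability_bound_def a'_def .
    also have "\<dots> < jumps b (Suc (Suc k))"
      using exceeds less_jumps_Suc_Suc[of n b k] nk(3) by simp
    also have "\<dots> < spike b (jumps b (Suc k))"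
      using spike_jumps[of b "Suc k"] jumps_less_iff[of b "Suc (Suc k)" "Suc (Suc (Suc k))"] by linarith
    finally show ?thesis using nk(1) le_jumps[of "Suc k" b] by (intro exI[of _ "jumps b (Suc k)"]) simp
  next
    case False
    have "n < a'" unfolding a'_def using next_support[OF p] less_trans by blast
    then have "p (jumps b k) < majorant p a'" using nk(2) by (intro majorant_greater) simp
    also have "\<dots> < jumps b (Suc k)" using False by simp
    also have "\<dots> < spike b (jumps b k)"
      using spike_jumps[of b k] jumps_less_iff[of b "Suc k" "Suc (Suc k)"] by linarith
    finally show ?thesis using nk(1) le_jumps[of k b] by (intro exI[of _ "jumps b k"]) simp
  qed
qed

lemma incomparable_family_spikes:
  assumes "unbounded_family B"
  shows "incomparable_family Pset le_star (spike ` B)"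
  unfolding incomparable_family_def
proof
  show "spike ` B \<subseteq> Pset" using spike_in_Pset by auto
  show "\<forall>p\<in>Pset. \<exists>q\<in>spike ` B. \<not> le_star p q \<and> \<not> le_star q p"
  proof
    fix p assume "p \<in> Pset"
    obtain b where "b \<in> B" "\<not> le_star b (incomparability_bound p)"
      using assms unfolding unbounded_family_def by blast
    with \<open>p \<in> Pset\<close> show "\<exists>q\<in>spike ` B. \<not> le_star p q \<and> \<not> le_star q p"
      using not_le_star_spike spike_not_le_star by blast
  qed
qed

definition dominator :: "(nat \<Rightarrow> nat) \<Rightarrow> nat \<Rightarrow> nat" where
  "dominator q n = majorant q n + next_support q (next_support q n)"

lemma le_star_dominator_if_spike_le:
  assumes "le_star (spike x) q"
  shows "le_star x (dominator q)"
proof -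
  obtain N where N: "\<forall>n\<ge>N. spike x n \<le> q n" using assms unfolding le_star_iff by blast
  have "x n \<le> dominator q n" if n: "jumps x N \<le> n" for n
  proof -
    obtain k where k: "jumps x k \<le> n" "n < jumps x (Suc k)" using jumps_block by blast
    have "N \<le> jumps x k" using jumps_block_index[OF n k(2)] le_jumps[of k x] by simp
    have "x n < spike x (jumps x k)" using k(2) by (simp add: less_jumps_Suc_Suc del: jumps.simps)
    also have "\<dots> \<le> q (jumps x k)" using N \<open>N \<le> jumps x k\<close> by blast
    also have "\<dots> < majorant q n" using k(1) by (rule majorant_greater)
    also have "\<dots> \<le> dominator q n" unfolding dominator_def by simp
    finally show ?thesis by simp
  qed
  then show ?thesis unfolding le_star_iff by blast
qed

lemma le_star_dominator_if_le_spike: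
  assumes q: "q \<in> Pset" and "le_star q (spike x)"
  shows "le_star x (dominator q)"
proof -
  obtain N where N: "\<forall>n\<ge>N. q n \<le> spike x n" using assms(2) unfolding le_star_iff by blast
  then have in_range: "m \<in> range (jumps x)" if "N \<le> m" "q m \<noteq> 0" for m
    using that by (fastforce simp: spike_def split: if_splits)
  have "x n \<le> dominator q n" if n: "N \<le> n" for n
  proof -
    obtain k where k: "jumps x k \<le> n" "n < jumps x (Suc k)" using jumps_block by blast
    define a where "a = next_support q n"
    define a' where "a' = next_support q a"
    have a: "n < a" "q a \<noteq> 0" and a': "a < a'" "q a' \<noteq> 0"
      using next_support[OF q] unfolding a_def a'_def by auto
    have "x n < jumps x (Suc (Suc k))" using k(2) by (simp add: less_jumps_Suc_Suc del: jumps.simps)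
    also have "\<dots> \<le> a'"
      using two_jumps_above[of a x a' k] in_range a a' n k(1) by simp
    also have "\<dots> \<le> dominator q n" unfolding dominator_def a'_def a_def by simp
    finally show ?thesis by simp
  qed
  then show ?thesis unfolding le_star_iff by blast
qed

lemma dominating_family_dominators:
  assumes "comparable_family Pset le_star F"
  shows "dominating_family (dominator ` F)"
  unfolding dominating_family_def
proof
  fix x
  obtain q where q: "q \<in> F" "le_star (spike x) q \<or> le_star q (spike x)"
    using assms spike_in_Pset unfolding comparable_family_def by blast
  have "q \<in> Pset" using q(1) assms unfolding comparable_family_def by blast
  with q have "le_star x (dominator q)"
    using le_star_dominator_if_spike_le le_star_dominator_if_le_spike by blast
  with q(1) show "\<exists>y\<in>dominator ` F. le_star x y" by blast
qed

theorem mainTheorem1: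
  shows "same_min_card (incomparable_family Pset le_star) unbounded_family
       \<and> same_min_card (comparable_family Pset le_star) dominating_family"
  unfolding same_min_card_def
  using unbounded_family_if_incomparable incomparable_family_spikes
    dominating_family_dominators comparable_family_if_dominating
    card_of_image card_of_mono1[OF subset_refl]
  by blast

end
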